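(* Let $(X,Y)$ be a random pair with $Y$ real-valued and $\mathbb{E}[Y^2]<\infty$, and let $m^\star(x)=\mathbb{E}[Y\mid X=x]$. Suppose $g^\star(x)=h(m^\star(x))$ for some strictly increasing $h:\mathbb{R}\to\mathbb{R}$. Let $\mathcal{F}$ be the set of nondecreasing functions $f:\mathbb{R}\to\mathbb{R}$, and let $f^\star$ be any minimizer of $\mathbb{E}\big[(Y-f(g^\star(X)))^2\big]$ over $f\in\mathcal{F}$. Then $f^\star(g^\star(X))=m^\star(X)$. *)

theory Defs
  imports "HOL-Probability.Probability"
begin

end

theory Submission
  imports Defs
begin

text \<open>Write \<open>Z = m \<circ> X\<close>, a version of \<open>E[Y | X]\<close>. For every square integrable
  \<open>\<sigma>(X)\<close>-measurable \<open>W\<close> the risk splits as \<open>E (Y - W)\<^sup>2 = E (Y - Z)\<^sup>2 + E (Z - W)\<^sup>2\<close>.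
  Because \<open>h\<close> is strictly increasing, every truncation \<open>max (-n) (min n Z)\<close> is of the form
  \<open>f (g X)\<close> with \<open>f\<close> nondecreasing, and its excess risk \<open>E (Z - W)\<^sup>2\<close> tends to \<open>0\<close> by dominated
  convergence. Hence the minimiser \<open>fstar (g X)\<close> has excess risk \<open>0\<close>, i.e. it equals \<open>Z\<close>
  almost surely.\<close>

lemma square_integrable_mult:
  fixes f g :: "'w \<Rightarrow> real"
  assumes [measurable]: "f \<in> borel_measurable M" "g \<in> borel_measurable M"
    and "integrable M (\<lambda>x. (f x)\<^sup>2)" "integrable M (\<lambda>x. (g x)\<^sup>2)"
  shows "integrable M (\<lambda>x. f x * g x)"
proof (rule Bochner_Integration.integrable_bound[where f="\<lambda>x. (f x)\<^sup>2 + (g x)\<^sup>2"])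
  show "integrable M (\<lambda>x. (f x)\<^sup>2 + (g x)\<^sup>2)" using assms by auto
  have "2 * \<bar>f x * g x\<bar> \<le> (f x)\<^sup>2 + (g x)\<^sup>2" for x
    using sum_squares_bound[of "\<bar>f x\<bar>" "\<bar>g x\<bar>"] by (simp add: abs_mult)
  then show "AE x in M. norm (f x * g x) \<le> norm ((f x)\<^sup>2 + (g x)\<^sup>2)"
    by (intro AE_I2) (smt (verit) real_norm_def zero_le_power2)
qed measurable

lemma square_integrable_diff:
  fixes f g :: "'w \<Rightarrow> real"
  assumes [measurable]: "f \<in> borel_measurable M" "g \<in> borel_measurable M"
    and "integrable M (\<lambda>x. (f x)\<^sup>2)" "integrable M (\<lambda>x. (g x)\<^sup>2)"
  shows "integrable M (\<lambda>x. (f x - g x)\<^sup>2)"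
proof -
  have "integrable M (\<lambda>x. (f x)\<^sup>2 - 2 * (f x * g x) + (g x)\<^sup>2)"
    using square_integrable_mult[OF assms] assms by auto
  also have "(\<lambda>x. (f x)\<^sup>2 - 2 * (f x * g x) + (g x)\<^sup>2) = (\<lambda>x. (f x - g x)\<^sup>2)"
    by (simp add: fun_eq_iff power2_diff)
  finally show ?thesis .
qed

lemma (in sigma_finite_subalgebra) square_integrable_cond_exp:
  assumes "integrable M Y" "integrable M (\<lambda>x. (Y x)\<^sup>2)"
    and "Z \<in> borel_measurable M" "AE x in M. Z x = real_cond_exp M F Y x"
  shows "integrable M (\<lambda>x. (Z x)\<^sup>2)"
proof -
  have "integrable M (\<lambda>x. (real_cond_exp M F Y x)\<^sup>2)"
    by (rule integrable_convex_cond_exp[where I=UNIV and q="\<lambda>x. x\<^sup>2"])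
       (auto simp: assms convex_power_even)
  moreover have "AE x in M. (real_cond_exp M F Y x)\<^sup>2 = (Z x)\<^sup>2"
    using assms(4) by auto
  ultimately show ?thesis
    using assms(3) by (subst integrable_cong_AE) auto
qed

text \<open>Pythagoras in \<open>L\<^sup>2\<close>: \<open>Y - Z\<close> is orthogonal to every square integrable
  \<open>F\<close>-measurable \<open>V\<close>, in particular to \<open>V = Z - W\<close>.\<close>

lemma (in sigma_finite_subalgebra) integral_square_diff_cond_exp:
  assumes [measurable]: "Y \<in> borel_measurable M"
    and "integrable M Y" "integrable M (\<lambda>x. (Y x)\<^sup>2)"
    and [measurable]: "Z \<in> borel_measurable F"
    and Z_eq: "AE x in M. Z x = real_cond_exp M F Y x"
    and [measurable]: "W \<in> borel_measurable F"
    and "integrable M (\<lambda>x. (W x)\<^sup>2)"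
  shows "(\<integral>x. (Y x - W x)\<^sup>2 \<partial>M) = (\<integral>x. (Y x - Z x)\<^sup>2 \<partial>M) + (\<integral>x. (Z x - W x)\<^sup>2 \<partial>M)"
proof -
  have ZM[measurable]: "Z \<in> borel_measurable M" and WM[measurable]: "W \<in> borel_measurable M"
    by (auto intro: measurable_from_subalg[OF subalg])
  have Z2: "integrable M (\<lambda>x. (Z x)\<^sup>2)"
    by (rule square_integrable_cond_exp) (use assms in auto)
  have ZW2: "integrable M (\<lambda>x. (Z x - W x)\<^sup>2)"
    by (rule square_integrable_diff[OF ZM WM Z2 assms(7)])
  have YZ2: "integrable M (\<lambda>x. (Y x - Z x)\<^sup>2)"
    by (rule square_integrable_diff[OF assms(1) ZM assms(3) Z2])
  have ZWY: "integrable M (\<lambda>x. (Z x - W x) * Y x)"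
    by (rule square_integrable_mult[OF _ assms(1) ZW2 assms(3)]) measurable
  have ZWZ: "integrable M (\<lambda>x. (Z x - W x) * Z x)"
    by (rule square_integrable_mult[OF _ ZM ZW2 Z2]) measurable
  have orth: "(\<integral>x. (Z x - W x) * Y x \<partial>M) = (\<integral>x. (Z x - W x) * Z x \<partial>M)"
  proof -
    have "(\<integral>x. (Z x - W x) * Y x \<partial>M) = (\<integral>x. (Z x - W x) * real_cond_exp M F Y x \<partial>M)"
      using real_cond_exp_intg(2)[OF ZWY] by simp
    also have "\<dots> = (\<integral>x. (Z x - W x) * Z x \<partial>M)"
      by (rule integral_cong_AE) (use Z_eq in auto)
    finally show ?thesis .
  qed
  have "(\<lambda>x. (Y x - W x)\<^sup>2) = (\<lambda>x. (Y x - Z x)\<^sup>2 + 2 * ((Z x - W x) * Y x)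
      - 2 * ((Z x - W x) * Z x) + (Z x - W x)\<^sup>2)"
    by (auto simp: fun_eq_iff power2_eq_square algebra_simps)
  then show ?thesis
    using YZ2 ZW2 ZWY ZWZ orth by simp
qed

lemma nn_integral_square_eq_integral:
  fixes f :: "'w \<Rightarrow> real"
  assumes "integrable M (\<lambda>x. (f x)\<^sup>2)"
  shows "(\<integral>\<^sup>+x. ennreal ((f x)\<^sup>2) \<partial>M) = ennreal (\<integral>x. (f x)\<^sup>2 \<partial>M)"
  by (rule nn_integral_eq_integral[OF assms]) auto

lemma (in sigma_finite_subalgebra) AE_eq_cond_exp_if_risk_minimal:
  assumes [measurable]: "Y \<in> borel_measurable M"
    and Y1: "integrable M Y" and Y2: "integrable M (\<lambda>x. (Y x)\<^sup>2)"
    and [measurable]: "Z \<in> borel_measurable F"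
    and Z_eq: "AE x in M. Z x = real_cond_exp M F Y x"
    and [measurable]: "W \<in> borel_measurable F" "\<And>n. V n \<in> borel_measurable F"
    and V2: "\<And>n. integrable M (\<lambda>x. (V n x)\<^sup>2)"
    and V_lim: "(\<lambda>n. \<integral>x. (Z x - V n x)\<^sup>2 \<partial>M) \<longlonglongrightarrow> 0"
    and risk_le: "\<And>n. (\<integral>\<^sup>+x. ennreal ((Y x - W x)\<^sup>2) \<partial>M)
                      \<le> (\<integral>\<^sup>+x. ennreal ((Y x - V n x)\<^sup>2) \<partial>M)"
  shows "AE x in M. W x = Z x"
proof -
  have ZM[measurable]: "Z \<in> borel_measurable M" and WM[measurable]: "W \<in> borel_measurable M"
    and VM[measurable]: "\<And>n. V n \<in> borel_measurable M"
    by (auto intro: measurable_from_subalg[OF subalg])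
  define c where "c = (\<integral>x. (Y x - Z x)\<^sup>2 \<partial>M)"
  define \<delta> where "\<delta> n = (\<integral>x. (Z x - V n x)\<^sup>2 \<partial>M)" for n
  have risk_V: "(\<integral>\<^sup>+x. ennreal ((Y x - V n x)\<^sup>2) \<partial>M) = ennreal (c + \<delta> n)" for n
    using integral_square_diff_cond_exp[OF _ Y1 Y2 _ Z_eq _ V2] square_integrable_diff[OF _ _ Y2 V2]
    by (simp add: nn_integral_square_eq_integral c_def \<delta>_def)
  have "integrable M (\<lambda>x. (Y x - W x)\<^sup>2)"
  proof (rule integrableI_bounded)
    show "(\<integral>\<^sup>+x. ennreal (norm ((Y x - W x)\<^sup>2)) \<partial>M) < \<infinity>"
      using risk_le[of 0] by (simp add: risk_V order_le_less_trans)
  qed measurable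
  from square_integrable_diff[OF _ _ Y2 this]
  have W2: "integrable M (\<lambda>x. (W x)\<^sup>2)" by simp
  have ZW2: "integrable M (\<lambda>x. (Z x - W x)\<^sup>2)"
    using square_integrable_diff[OF ZM WM square_integrable_cond_exp[OF Y1 Y2 ZM Z_eq] W2] .
  have "(\<integral>x. (Z x - W x)\<^sup>2 \<partial>M) \<le> \<delta> n" for n
  proof -
    have "ennreal (c + (\<integral>x. (Z x - W x)\<^sup>2 \<partial>M)) \<le> ennreal (c + \<delta> n)"
      using risk_le[of n] integral_square_diff_cond_exp[OF _ Y1 Y2 _ Z_eq _ W2]
        square_integrable_diff[OF _ _ Y2 W2]
      by (simp add: nn_integral_square_eq_integral risk_V c_def)
    moreover have "0 \<le> c + \<delta> n" by (simp add: c_def \<delta>_def)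
    ultimately show ?thesis by (simp add: ennreal_le_iff)
  qed
  then have "(\<integral>x. (Z x - W x)\<^sup>2 \<partial>M) \<le> 0"
    using LIMSEQ_le_const[OF V_lim[folded \<delta>_def]] by blast
  then have "(\<integral>x. (Z x - W x)\<^sup>2 \<partial>M) = 0"
    by (simp add: order.antisym)
  then have "AE x in M. (Z x - W x)\<^sup>2 = 0"
    using ZW2 by (simp add: integral_nonneg_eq_0_iff_AE)
  then show ?thesis by eventually_elim simp
qed

lemma tendsto_integral_square_truncation:
  fixes Z :: "'w \<Rightarrow> real"
  assumes [measurable]: "Z \<in> borel_measurable M" and "integrable M (\<lambda>x. (Z x)\<^sup>2)"
  shows "(\<lambda>n. \<integral>x. (Z x - max (- real n) (min (real n) (Z x)))\<^sup>2 \<partial>M) \<longlonglongrightarrow> 0"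
proof -
  have "(\<lambda>n. \<integral>x. (Z x - max (- real n) (min (real n) (Z x)))\<^sup>2 \<partial>M) \<longlonglongrightarrow> (\<integral>x. 0 \<partial>M)"
  proof (rule integral_dominated_convergence[where w="\<lambda>x. (Z x)\<^sup>2"])
    have "\<forall>\<^sub>F n in sequentially. (Z x - max (- real n) (min (real n) (Z x)))\<^sup>2 = 0" for x
      unfolding eventually_sequentially
    proof (intro exI allI impI)
      fix n assume "nat \<lceil>\<bar>Z x\<bar>\<rceil> \<le> n"
      then have "\<bar>Z x\<bar> \<le> real n" by linarith
      then show "(Z x - max (- real n) (min (real n) (Z x)))\<^sup>2 = 0" by auto
    qed
    then show "AE x in M. (\<lambda>n. (Z x - max (- real n) (min (real n) (Z x)))\<^sup>2) \<longlonglongrightarrow> 0"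
      by (intro AE_I2 tendsto_eventually)
    show "AE x in M. norm ((Z x - max (- real n) (min (real n) (Z x)))\<^sup>2) \<le> (Z x)\<^sup>2" for n
      by (intro AE_I2) (auto simp: abs_le_square_iff[symmetric])
  qed (use assms in auto)
  then show ?thesis by simp
qed

lemma square_integrable_truncation:
  fixes Z :: "'w \<Rightarrow> real"
  assumes [measurable]: "Z \<in> borel_measurable M" and "integrable M (\<lambda>x. (Z x)\<^sup>2)"
  shows "integrable M (\<lambda>x. (max (- real n) (min (real n) (Z x)))\<^sup>2)"
proof (rule Bochner_Integration.integrable_bound[OF assms(2)])
  show "AE x in M. norm ((max (- real n) (min (real n) (Z x)))\<^sup>2) \<le> norm ((Z x)\<^sup>2)"
    by (intro AE_I2) (auto simp: abs_le_square_iff[symmetric])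
qed measurable

lemma mono_factor_through_strict_mono:
  fixes h :: "'a::linorder \<Rightarrow> 'b::linorder" and \<phi> :: "'a \<Rightarrow> 'c::conditionally_complete_linorder"
  assumes h: "strict_mono h" and "mono \<phi>" and "bdd_below (range \<phi>)" "bdd_above (range \<phi>)"
  shows "\<exists>f. mono f \<and> (\<forall>s. f (h s) = \<phi> s)"
proof -
  obtain b where b: "\<And>s. b \<le> \<phi> s"
    using \<open>bdd_below (range \<phi>)\<close> by (auto simp: bdd_below_def)
  obtain B where B: "\<And>s. \<phi> s \<le> B"
    using \<open>bdd_above (range \<phi>)\<close> by (auto simp: bdd_above_def)
  define f where "f t = Sup (insert b {\<phi> s | s. h s \<le> t})" for t
  have "mono f"
  proof (rule monoI)
    fix t t' :: 'b assume "t \<le> t'"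
    have "bdd_above (insert b {\<phi> s | s. h s \<le> t'})"
      using b B by (intro bdd_aboveI[where M=B]) (auto intro: order.trans)
    then show "f t \<le> f t'"
      unfolding f_def using \<open>t \<le> t'\<close> by (intro cSup_subset_mono) auto
  qed
  moreover have "f (h s) = \<phi> s" for s
    unfolding f_def
  proof (rule cSup_eq_maximum)
    show "\<phi> s \<in> insert b {\<phi> s' | s'. h s' \<le> h s}" by auto
    fix y assume "y \<in> insert b {\<phi> s' | s'. h s' \<le> h s}"
    then show "y \<le> \<phi> s"
      using b strict_mono_less_eq[OF h] monoD[OF \<open>mono \<phi>\<close>] by auto
  qed
  ultimately show ?thesis by blast
qed

lemma (in finite_measure) sigma_finite_subalgebra_vimage_algebra:
  assumes "X \<in> measurable M N"
  shows "sigma_finite_subalgebra M (vimage_algebra (space M) X N)"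
proof (rule finite_measure_subalgebra_is_sigma_finite)
  have "subalgebra M (vimage_algebra (space M) X N)"
    using assms measurable_iff_sets[of X M N] by (auto simp: subalgebra_def)
  then show "finite_measure_subalgebra M (vimage_algebra (space M) X N)"
    by (simp add: finite_measure_subalgebra_def finite_measure_subalgebra_axioms_def
        finite_measure_axioms)
qed

theorem theorem3:
  fixes M :: "'w measure" and N :: "'a measure"
    and X :: "'w \<Rightarrow> 'a" and Y :: "'w \<Rightarrow> real"
    and m :: "'a \<Rightarrow> real" and g :: "'a \<Rightarrow> real"
    and h :: "real \<Rightarrow> real" and fstar :: "real \<Rightarrow> real"
  assumes "prob_space M"
    and "X \<in> measurable M N"
    and "Y \<in> borel_measurable M"
    and "integrable M (\<lambda>\<omega>. (Y \<omega>)\<^sup>2)"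
    and "m \<in> borel_measurable N"
    and "AE \<omega> in M. m (X \<omega>) = real_cond_exp M (vimage_algebra (space M) X N) Y \<omega>"
    and "strict_mono h"
    and "\<And>x. g x = h (m x)"
    and "mono fstar"
    and "\<And>f::real \<Rightarrow> real. mono f \<Longrightarrow>
           (\<integral>\<^sup>+\<omega>. ennreal ((Y \<omega> - fstar (g (X \<omega>)))\<^sup>2) \<partial>M)
           \<le> (\<integral>\<^sup>+\<omega>. ennreal ((Y \<omega> - f (g (X \<omega>)))\<^sup>2) \<partial>M)"
  shows "AE \<omega> in M. fstar (g (X \<omega>)) = m (X \<omega>)"
proof -
  interpret prob_space M by fact
  define F where "F = vimage_algebra (space M) X N"
  interpret S: sigma_finite_subalgebra M F
    unfolding F_def by (rule sigma_finite_subalgebra_vimage_algebra[OF assms(2)])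
  have [measurable]: "X \<in> measurable F N"
    unfolding F_def using assms(2) by (intro measurable_vimage_algebra1) (auto dest: measurable_space)
  have [measurable]: "X \<in> measurable M N" "m \<in> borel_measurable N" "Y \<in> borel_measurable M"
    "fstar \<in> borel_measurable borel" "h \<in> borel_measurable borel"
    using assms(2,3,5,7,9) by (auto intro: borel_measurable_mono strict_mono_mono)
  have "g = (\<lambda>x. h (m x))" using assms(8) by blast
  then have [measurable]: "g \<in> borel_measurable N" by simp
  have Y1: "integrable M Y" by (rule square_integrable_imp_integrable[OF assms(3,4)])
  have Z_eq: "AE \<omega> in M. m (X \<omega>) = real_cond_exp M F Y \<omega>"
    using assms(6) unfolding F_def .
  have "\<exists>f. mono f \<and> (\<forall>s. f (h s) = max (- real n) (min (real n) s))" for n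
    by (rule mono_factor_through_strict_mono[OF assms(7)])
       (auto simp: mono_def intro!: bdd_belowI[where m="- real n"] bdd_aboveI[where M="real n"])
  then obtain f where f_mono: "\<And>n. mono (f n)"
    and f_h: "\<And>n s. f n (h s) = max (- real n) (min (real n) s)"
    by metis
  have Z2: "integrable M (\<lambda>\<omega>. (m (X \<omega>))\<^sup>2)"
    by (rule S.square_integrable_cond_exp[OF Y1 assms(4) _ Z_eq]) measurable
  show ?thesis
  proof (rule S.AE_eq_cond_exp_if_risk_minimal[OF _ Y1 assms(4) _ Z_eq])
    show "(\<lambda>n. \<integral>\<omega>. (m (X \<omega>) - max (- real n) (min (real n) (m (X \<omega>))))\<^sup>2 \<partial>M) \<longlonglongrightarrow> 0"
      by (rule tendsto_integral_square_truncation[OF _ Z2]) measurable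
    show "integrable M (\<lambda>\<omega>. (max (- real n) (min (real n) (m (X \<omega>))))\<^sup>2)" for n
      by (rule square_integrable_truncation[OF _ Z2]) measurable
    show "(\<integral>\<^sup>+\<omega>. ennreal ((Y \<omega> - fstar (g (X \<omega>)))\<^sup>2) \<partial>M)
        \<le> (\<integral>\<^sup>+\<omega>. ennreal ((Y \<omega> - max (- real n) (min (real n) (m (X \<omega>))))\<^sup>2) \<partial>M)" for n
      using assms(10)[OF f_mono[of n]] by (simp add: assms(8) f_h)
  qed measurable
qed

end
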